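(* Let $X$ be a collectionwise normal homogeneous space with $\operatorname{ind} X=0$ which has property $\mathcal D$. Then $X$ is strongly discrete homogeneous.
   Context: $X$ is homogeneous if for any $x,y\in X$ there is a homeomorphism $f\colon X\to X$ with $f(x)=y$. A space $X$ is collectionwise normal if it is $T_1$ and for every discrete family $\{F_s\}_{s\in S}$ of closed subsets there is a discrete family $\{V_s\}_{s\in S}$ of open sets with $F_s\subseteq V_s$. $\operatorname{ind}$ is the small inductive dimension. A Hausdorff space $X$ has property $\mathcal D$ if for any proper clopen subsets $F,G$ of $X$ that are homeomorphic, the subspaces $X\setminus F$ and $X\setminus G$ are also homeomorphic. A subset $D$ of $X$ is discrete if each point of $X$ has a neighbourhood containing at most one point of $D$. A Hausdorff space $X$ is strongly discrete homogeneous (sDH) if for any two discrete subsets $A,B$ and any bijection $f\colon A\to B$, $f$ extends to a homeomorphism of $X$ onto itself. *)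

theory Defs
  imports "HOL-Analysis.Analysis"
begin

definition homogeneous_space :: "'a topology \<Rightarrow> bool" where
  "homogeneous_space X \<longleftrightarrow>
     (\<forall>x\<in>topspace X. \<forall>y\<in>topspace X. \<exists>f. homeomorphic_map X X f \<and> f x = y)"

definition discrete_family :: "'a topology \<Rightarrow> 'i set \<Rightarrow> ('i \<Rightarrow> 'a set) \<Rightarrow> bool" where
  "discrete_family X S F \<longleftrightarrow>
     (\<forall>x\<in>topspace X. \<exists>W. openin X W \<and> x \<in> W \<and>
        (\<forall>s\<in>S. \<forall>t\<in>S. F s \<inter> W \<noteq> {} \<and> F t \<inter> W \<noteq> {} \<longrightarrow> s = t))"

text \<open>Discrete families are indexed by themselves (a set of subsets); this loses no
  generality.\<close>
definition collectionwise_normal :: "'a topology \<Rightarrow> bool" where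
  "collectionwise_normal X \<longleftrightarrow> t1_space X \<and>
     (\<forall>\<F>. (\<forall>F\<in>\<F>. closedin X F) \<and> discrete_family X \<F> id \<longrightarrow>
        (\<exists>V. (\<forall>F\<in>\<F>. openin X (V F) \<and> F \<subseteq> V F) \<and> discrete_family X \<F> V))"

text \<open>ind X = 0: X is nonempty and every point has arbitrarily small open
  neighbourhoods with empty boundary, i.e. clopen ones.\<close>
definition ind_zero :: "'a topology \<Rightarrow> bool" where
  "ind_zero X \<longleftrightarrow> topspace X \<noteq> {} \<and>
     (\<forall>x U. openin X U \<and> x \<in> U \<longrightarrow>
        (\<exists>V. openin X V \<and> closedin X V \<and> x \<in> V \<and> V \<subseteq> U))"

definition property_D :: "'a topology \<Rightarrow> bool" where
  "property_D X \<longleftrightarrow> Hausdorff_space X \<and>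
     (\<forall>F G. openin X F \<and> closedin X F \<and> F \<noteq> topspace X \<and>
            openin X G \<and> closedin X G \<and> G \<noteq> topspace X \<and>
            (subtopology X F homeomorphic_space subtopology X G) \<longrightarrow>
            (subtopology X (topspace X - F) homeomorphic_space subtopology X (topspace X - G)))"

definition discrete_subset :: "'a topology \<Rightarrow> 'a set \<Rightarrow> bool" where
  "discrete_subset X D \<longleftrightarrow> D \<subseteq> topspace X \<and>
     (\<forall>x\<in>topspace X. \<exists>W. openin X W \<and> x \<in> W \<and>
        (\<forall>a\<in>D. \<forall>b\<in>D. a \<in> W \<and> b \<in> W \<longrightarrow> a = b))"

definition sDH :: "'a topology \<Rightarrow> bool" where
  "sDH X \<longleftrightarrow> Hausdorff_space X \<and>
     (\<forall>A B f. discrete_subset X A \<and> discrete_subset X B \<and> bij_betw f A B \<longrightarrow>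
        (\<exists>h. homeomorphic_map X X h \<and> (\<forall>a\<in>A. h a = f a)))"

end

(*
  If A or B is all of X, then X is discrete. Property D forces a discrete space to be
  finite: for infinite T the proper subsets T - {a} and T - {a, b} are equipotent while
  their complements are not. Hence A = B = X and f itself is a homeomorphism.

  Otherwise pick p outside A and q outside B. Collectionwise normality expands A and B to
  discrete families of open sets C a and C' b, homogeneity gives homeomorphisms H a of X
  with H a a = f a, and ind X = 0 yields clopen sets U a containing a, inside C a - {p},
  whose images H a (U a) lie inside C' (f a) - {q}. Both new families are discrete, so
  their unions F and G are clopen, and they are proper because they miss p and q. The
  maps H a paste to a homeomorphism from F onto G, property D gives one from X - F onto
  X - G, and pasting these two extends f.
*)

theory Submission
  imports Defs
begin

lemma homeomorphic_space_discrete_topology_iff: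
  "discrete_topology S homeomorphic_space discrete_topology T \<longleftrightarrow> S \<approx> T"
  unfolding homeomorphic_space_def homeomorphic_maps_def eqpoll_iff_bijections
  by (auto simp: Pi_iff) blast

lemma homeomorphic_map_discrete_topology:
  assumes "bij_betw f S T"
  shows "homeomorphic_map (discrete_topology S) (discrete_topology T) f"
  using assms unfolding homeomorphic_map_maps homeomorphic_maps_def bij_betw_iff_bijections
  by (auto simp: Pi_iff)

lemma property_D_discrete_topology:
  "property_D (discrete_topology T) \<longleftrightarrow> (\<forall>F G. F \<subset> T \<and> G \<subset> T \<and> F \<approx> G \<longrightarrow> T - F \<approx> T - G)"
proof -
  let ?D = "discrete_topology T"
  have "(openin ?D F \<and> closedin ?D F \<and> F \<noteq> topspace ?D \<and>
         openin ?D G \<and> closedin ?D G \<and> G \<noteq> topspace ?D \<and>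
         (subtopology ?D F homeomorphic_space subtopology ?D G) \<longrightarrow>
         (subtopology ?D (topspace ?D - F) homeomorphic_space subtopology ?D (topspace ?D - G)))
        \<longleftrightarrow> (F \<subset> T \<and> G \<subset> T \<and> F \<approx> G \<longrightarrow> T - F \<approx> T - G)" for F G
  proof (cases "F \<subseteq> T \<and> G \<subseteq> T")
    case True
    then have "T \<inter> F = F" "T \<inter> G = G" "T \<inter> (T - F) = T - F" "T \<inter> (T - G) = T - G"
      by auto
    with True show ?thesis
      by (simp add: homeomorphic_space_discrete_topology_iff psubset_eq)
  qed auto
  then show ?thesis
    unfolding property_D_def by simp
qed

lemma property_D_discrete_topology_imp_finite:
  assumes "property_D (discrete_topology T)"
  shows "finite T"
proof (rule ccontr)
  assume "infinite T"
  have complements: "T - F \<approx> T - G" if "F \<subset> T" "G \<subset> T" "F \<approx> G" for F G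
    using assms that by (simp add: property_D_discrete_topology)
  from \<open>infinite T\<close> obtain a where a: "a \<in> T"
    by (metis finite.emptyI ex_in_conv)
  from \<open>infinite T\<close> have "infinite (T - {a})"
    by simp
  then obtain b where "b \<in> T - {a}"
    by (metis finite.emptyI ex_in_conv)
  with a have ab: "a \<in> T" "b \<in> T" "a \<noteq> b"
    by auto
  define G where "G = T - {a, b}"
  have "infinite G"
    using \<open>infinite T\<close> by (simp add: G_def)
  then have "insert b G \<approx> G"
    by (rule infinite_insert_eqpoll)
  moreover have "insert b G = T - {a}"
    using ab by (auto simp: G_def)
  ultimately have "T - (T - {a}) \<approx> T - G"
    using ab by (intro complements) (auto simp: G_def)
  moreover have "T - (T - {a}) = {a}" "T - G = {a, b}"
    using ab by (auto simp: G_def)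
  ultimately show False
    using ab by (simp add: eqpoll_iff_card)
qed

lemma discrete_subset_topspace_imp_discrete_topology:
  assumes "discrete_subset X (topspace X)"
  shows "X = discrete_topology (topspace X)"
  unfolding eq_commute[of X] discrete_topology_unique
proof (intro conjI refl ballI)
  fix x assume x: "x \<in> topspace X"
  then obtain W where "openin X W" "x \<in> W" "\<forall>a\<in>topspace X. \<forall>b\<in>topspace X. a \<in> W \<and> b \<in> W \<longrightarrow> a = b"
    using assms unfolding discrete_subset_def by blast
  moreover then have "W = {x}"
    using openin_subset by blast
  ultimately show "openin X {x}"
    by simp
qed

lemma property_D_discrete_space_bijection:
  assumes "property_D X" "X = discrete_topology T"
    and "A \<subseteq> T" "B \<subseteq> T" "bij_betw f A B" "A = T \<or> B = T"
  shows "homeomorphic_map X X f"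
proof -
  have "finite T"
    using assms(1,2) property_D_discrete_topology_imp_finite by blast
  moreover have "card A = card B"
    using assms(5) by (rule bij_betw_same_card)
  ultimately have "A = T" "B = T"
    using assms(3,4,6) by (metis card_subset_eq finite_subset)+
  then show ?thesis
    using assms(2,5) homeomorphic_map_discrete_topology by blast
qed

lemma homeomorphic_map_pasting:
  assumes P: "\<And>i. i \<in> I \<Longrightarrow> openin X (P i)" "disjoint_family_on P I" "topspace X \<subseteq> (\<Union>i\<in>I. P i)"
    and Q: "\<And>i. i \<in> I \<Longrightarrow> openin Y (Q i)" "disjoint_family_on Q I" "topspace Y \<subseteq> (\<Union>i\<in>I. Q i)"
    and hom: "\<And>i. i \<in> I \<Longrightarrow> homeomorphic_map (subtopology X (P i)) (subtopology Y (Q i)) (\<phi> i)"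
  shows "\<exists>f. homeomorphic_map X Y f \<and> (\<forall>i\<in>I. \<forall>x\<in>P i. f x = \<phi> i x)"
proof -
  obtain \<psi> where \<psi>: "\<And>i. i \<in> I \<Longrightarrow> homeomorphic_maps (subtopology X (P i)) (subtopology Y (Q i)) (\<phi> i) (\<psi> i)"
    using hom unfolding homeomorphic_map_maps by metis
  have PX: "P i \<subseteq> topspace X" and QY: "Q i \<subseteq> topspace Y" if "i \<in> I" for i
    using openin_subset[OF P(1)] openin_subset[OF Q(1)] that by auto
  have cont: "continuous_map (subtopology X (P i)) Y (\<phi> i)" "continuous_map (subtopology Y (Q i)) X (\<psi> i)"
    if "i \<in> I" for i
    using \<psi>[OF that] continuous_map_into_fulltopology unfolding homeomorphic_maps_def by blast+
  have agree_\<phi>: "\<phi> i x = \<phi> j x" if "i \<in> I" "j \<in> I" "x \<in> topspace X \<inter> P i \<inter> P j" for i j x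
    using that disjoint_family_onD[OF P(2)] by (cases "i = j") auto
  have agree_\<psi>: "\<psi> i y = \<psi> j y" if "i \<in> I" "j \<in> I" "y \<in> topspace Y \<inter> Q i \<inter> Q j" for i j y
    using that disjoint_family_onD[OF Q(2)] by (cases "i = j") auto
  obtain f where f: "continuous_map X Y f" "\<And>x i. i \<in> I \<Longrightarrow> x \<in> topspace X \<inter> P i \<Longrightarrow> f x = \<phi> i x"
    using pasting_lemma_exists[OF P(3,1) cont(1) agree_\<phi>] by blast
  obtain g where g: "continuous_map Y X g" "\<And>y i. i \<in> I \<Longrightarrow> y \<in> topspace Y \<inter> Q i \<Longrightarrow> g y = \<psi> i y"
    using pasting_lemma_exists[OF Q(3,1) cont(2) agree_\<psi>] by blast
  have inverse_\<phi>: "\<phi> i x \<in> topspace Y \<inter> Q i \<and> \<psi> i (\<phi> i x) = x" if "i \<in> I" "x \<in> P i" for i x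
    using \<psi>[OF that(1)] that PX[OF that(1)] unfolding homeomorphic_maps_def
    by (fastforce dest!: continuous_map_image_subset_topspace)
  have inverse_\<psi>: "\<psi> i y \<in> topspace X \<inter> P i \<and> \<phi> i (\<psi> i y) = y" if "i \<in> I" "y \<in> Q i" for i y
    using \<psi>[OF that(1)] that QY[OF that(1)] unfolding homeomorphic_maps_def
    by (fastforce dest!: continuous_map_image_subset_topspace)
  have "homeomorphic_maps X Y f g"
    unfolding homeomorphic_maps_def
  proof (intro conjI ballI f(1) g(1))
    fix x assume x: "x \<in> topspace X"
    then obtain i where i: "i \<in> I" "x \<in> P i"
      using P(3) by blast
    with x show "g (f x) = x"
      using f(2)[OF i(1)] g(2)[OF i(1)] inverse_\<phi>[OF i] by auto
  next
    fix y assume y: "y \<in> topspace Y"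
    then obtain i where i: "i \<in> I" "y \<in> Q i"
      using Q(3) by blast
    with y show "f (g y) = y"
      using f(2)[OF i(1)] g(2)[OF i(1)] inverse_\<psi>[OF i] by auto
  qed
  then show ?thesis
    using f(2) PX homeomorphic_map_maps by blast
qed

lemma discrete_familyE:
  assumes "discrete_family X I S" "x \<in> topspace X"
  obtains W where "openin X W" "x \<in> W"
    "\<And>i j. i \<in> I \<Longrightarrow> j \<in> I \<Longrightarrow> S i \<inter> W \<noteq> {} \<Longrightarrow> S j \<inter> W \<noteq> {} \<Longrightarrow> i = j"
  using assms unfolding discrete_family_def by meson

lemma discrete_family_subordinate:
  assumes "discrete_family X J S" "inj_on g I" "g ` I \<subseteq> J" "\<And>i. i \<in> I \<Longrightarrow> T i \<subseteq> S (g i)"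
  shows "discrete_family X I T"
  unfolding discrete_family_def
proof
  fix x assume "x \<in> topspace X"
  then obtain W where W: "openin X W" "x \<in> W"
    "\<And>s t. s \<in> J \<Longrightarrow> t \<in> J \<Longrightarrow> S s \<inter> W \<noteq> {} \<Longrightarrow> S t \<inter> W \<noteq> {} \<Longrightarrow> s = t"
    by (meson discrete_familyE[OF assms(1)])
  have "i = j" if "i \<in> I" "j \<in> I" "T i \<inter> W \<noteq> {}" "T j \<inter> W \<noteq> {}" for i j
  proof -
    have "g i \<in> J" "g j \<in> J"
      using assms(3) that(1,2) by auto
    moreover have "S (g i) \<inter> W \<noteq> {}" "S (g j) \<inter> W \<noteq> {}"
      using assms(4)[OF that(1)] assms(4)[OF that(2)] that(3,4) by auto
    ultimately have "g i = g j"
      by (rule W(3))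
    then show ?thesis
      using assms(2) that(1,2) by (simp add: inj_on_def)
  qed
  with W(1,2) show "\<exists>W. openin X W \<and> x \<in> W \<and> (\<forall>i\<in>I. \<forall>j\<in>I. T i \<inter> W \<noteq> {} \<and> T j \<inter> W \<noteq> {} \<longrightarrow> i = j)"
    by blast
qed

lemma discrete_family_imp_disjoint_family_on:
  assumes "discrete_family X I S" "\<And>i. i \<in> I \<Longrightarrow> S i \<subseteq> topspace X"
  shows "disjoint_family_on S I"
  unfolding disjoint_family_on_def
proof (intro ballI impI equals0I)
  fix i j x assume ij: "i \<in> I" "j \<in> I" "i \<noteq> j" and x: "x \<in> S i \<inter> S j"
  have "x \<in> topspace X"
    using assms(2) ij(1) x by blast
  then obtain W where "x \<in> W"
    "\<And>s t. s \<in> I \<Longrightarrow> t \<in> I \<Longrightarrow> S s \<inter> W \<noteq> {} \<Longrightarrow> S t \<inter> W \<noteq> {} \<Longrightarrow> s = t"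
    by (meson discrete_familyE[OF assms(1)])
  with ij x show False
    by blast
qed

lemma closedin_Union_discrete_family:
  assumes "discrete_family X I S" "\<And>i. i \<in> I \<Longrightarrow> closedin X (S i)"
  shows "closedin X (\<Union>i\<in>I. S i)"
proof (rule closedin_locally_finite_Union)
  show "locally_finite_in X (S ` I)"
    unfolding locally_finite_in_def
  proof (intro conjI ballI)
    show "\<Union> (S ` I) \<subseteq> topspace X"
      using assms(2) closedin_subset by blast
  next
    fix x assume "x \<in> topspace X"
    then obtain W where W: "openin X W" "x \<in> W"
      "\<And>s t. s \<in> I \<Longrightarrow> t \<in> I \<Longrightarrow> S s \<inter> W \<noteq> {} \<Longrightarrow> S t \<inter> W \<noteq> {} \<Longrightarrow> s = t"
      by (meson discrete_familyE[OF assms(1)])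
    have "finite {U \<in> S ` I. U \<inter> W \<noteq> {}}"
    proof (cases "\<exists>j\<in>I. S j \<inter> W \<noteq> {}")
      case True
      then obtain j where "j \<in> I" "S j \<inter> W \<noteq> {}"
        by blast
      with W(3) have "{U \<in> S ` I. U \<inter> W \<noteq> {}} \<subseteq> {S j}"
        by blast
      then show ?thesis
        using finite_subset by blast
    next
      case False
      then have "{U \<in> S ` I. U \<inter> W \<noteq> {}} = {}"
        by blast
      then show ?thesis
        by (metis finite.emptyI)
    qed
    with W(1,2) show "\<exists>W. openin X W \<and> x \<in> W \<and> finite {U \<in> S ` I. U \<inter> W \<noteq> {}}"
      by blast
  qed
qed (use assms(2) in blast)

lemma collectionwise_normal_discrete_subset_expansion:
  assumes "collectionwise_normal X" "discrete_subset X D"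
  obtains V where "discrete_family X D V" "\<And>d. d \<in> D \<Longrightarrow> openin X (V d) \<and> d \<in> V d"
proof -
  define \<F> where "\<F> = (\<lambda>d. {d}) ` D"
  have "\<forall>F\<in>\<F>. closedin X F"
    using assms unfolding collectionwise_normal_def discrete_subset_def \<F>_def
    by (auto intro: closedin_t1_singleton)
  moreover have "discrete_family X \<F> id"
    unfolding discrete_family_def
  proof
    fix x assume "x \<in> topspace X"
    then obtain W where "openin X W" "x \<in> W" "\<forall>a\<in>D. \<forall>b\<in>D. a \<in> W \<and> b \<in> W \<longrightarrow> a = b"
      using assms(2) unfolding discrete_subset_def by meson
    then show "\<exists>W. openin X W \<and> x \<in> W \<and> (\<forall>s\<in>\<F>. \<forall>t\<in>\<F>. id s \<inter> W \<noteq> {} \<and> id t \<inter> W \<noteq> {} \<longrightarrow> s = t)"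
      by (auto simp: \<F>_def)
  qed
  ultimately obtain W where W: "\<forall>F\<in>\<F>. openin X (W F) \<and> F \<subseteq> W F" "discrete_family X \<F> W"
    using assms(1) unfolding collectionwise_normal_def by blast
  show thesis
  proof
    show "discrete_family X D (\<lambda>d. W {d})"
      by (rule discrete_family_subordinate[OF W(2), of "\<lambda>d. {d}"]) (auto simp: \<F>_def inj_on_def)
    show "openin X (W {d}) \<and> d \<in> W {d}" if "d \<in> D" for d
      using W(1) that by (auto simp: \<F>_def)
  qed
qed

lemma property_D_complements_homeomorphic:
  assumes "property_D X"
    and "openin X F" "closedin X F" "F \<noteq> topspace X"
    and "openin X G" "closedin X G" "G \<noteq> topspace X"
    and "subtopology X F homeomorphic_space subtopology X G"
  shows "subtopology X (topspace X - F) homeomorphic_space subtopology X (topspace X - G)"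
  using assms unfolding property_D_def by blast

lemma property_D_homeomorphism_extension:
  assumes "property_D X"
    and F: "openin X F" "closedin X F" "F \<noteq> topspace X"
    and G: "openin X G" "closedin X G" "G \<noteq> topspace X"
    and g: "homeomorphic_map (subtopology X F) (subtopology X G) g"
  shows "\<exists>h. homeomorphic_map X X h \<and> (\<forall>x\<in>F. h x = g x)"
proof -
  have "subtopology X (topspace X - F) homeomorphic_space subtopology X (topspace X - G)"
    using property_D_complements_homeomorphic[OF assms(1) F G] g homeomorphic_map_imp_homeomorphic_space by blast
  then obtain k where k: "homeomorphic_map (subtopology X (topspace X - F)) (subtopology X (topspace X - G)) k"
    unfolding homeomorphic_space by blast
  define P where "P b = (if b then F else topspace X - F)" for b
  define Q where "Q b = (if b then G else topspace X - G)" for b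
  define \<phi> where "\<phi> b = (if b then g else k)" for b
  have "\<exists>h. homeomorphic_map X X h \<and> (\<forall>b\<in>UNIV. \<forall>x\<in>P b. h x = \<phi> b x)"
  proof (rule homeomorphic_map_pasting)
    show "openin X (P b)" "openin X (Q b)" for b
      using F G by (auto simp: P_def Q_def)
    show "disjoint_family_on P UNIV" "disjoint_family_on Q UNIV"
      by (auto simp: disjoint_family_on_def P_def Q_def)
    show "homeomorphic_map (subtopology X (P b)) (subtopology X (Q b)) (\<phi> b)" for b
      using g k by (simp add: P_def Q_def \<phi>_def)
  qed (auto simp: P_def Q_def)
  then show ?thesis
    by (auto simp: P_def \<phi>_def)
qed

lemma property_D_discrete_family_homeomorphism_extension:
  assumes pD: "property_D X"
    and U: "discrete_family X I U" "\<And>i. i \<in> I \<Longrightarrow> openin X (U i) \<and> closedin X (U i)"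
      "p \<in> topspace X" "p \<notin> (\<Union>i\<in>I. U i)"
    and V: "discrete_family X I V" "\<And>i. i \<in> I \<Longrightarrow> openin X (V i) \<and> closedin X (V i)"
      "q \<in> topspace X" "q \<notin> (\<Union>i\<in>I. V i)"
    and \<phi>: "\<And>i. i \<in> I \<Longrightarrow> homeomorphic_map (subtopology X (U i)) (subtopology X (V i)) (\<phi> i)"
  shows "\<exists>h. homeomorphic_map X X h \<and> (\<forall>i\<in>I. \<forall>x\<in>U i. h x = \<phi> i x)"
proof -
  define F where "F = (\<Union>i\<in>I. U i)"
  define G where "G = (\<Union>i\<in>I. V i)"
  have UX: "U i \<subseteq> topspace X" and VX: "V i \<subseteq> topspace X" if "i \<in> I" for i
    using U(2)[OF that] V(2)[OF that] openin_subset by auto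
  have F: "openin X F" "closedin X F" "F \<noteq> topspace X"
    using U closedin_Union_discrete_family[OF U(1)] by (auto simp: F_def)
  have G: "openin X G" "closedin X G" "G \<noteq> topspace X"
    using V closedin_Union_discrete_family[OF V(1)] by (auto simp: G_def)
  have "\<exists>g. homeomorphic_map (subtopology X F) (subtopology X G) g \<and> (\<forall>i\<in>I. \<forall>x\<in>U i. g x = \<phi> i x)"
  proof (rule homeomorphic_map_pasting)
    show "openin (subtopology X F) (U i)" if "i \<in> I" for i
      using U(2) that by (auto simp: F_def openin_subtopology_alt intro!: image_eqI[of _ _ "U i"])
    show "openin (subtopology X G) (V i)" if "i \<in> I" for i
      using V(2) that by (auto simp: G_def openin_subtopology_alt intro!: image_eqI[of _ _ "V i"])
    show "disjoint_family_on U I" "disjoint_family_on V I"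
      using discrete_family_imp_disjoint_family_on U(1) V(1) UX VX by auto
    show "homeomorphic_map (subtopology (subtopology X F) (U i)) (subtopology (subtopology X G) (V i)) (\<phi> i)"
      if "i \<in> I" for i
      using \<phi>[OF that] that by (simp add: F_def G_def subtopology_subtopology Int_absorb1 UN_upper)
  qed (auto simp: F_def G_def)
  then obtain g where g: "homeomorphic_map (subtopology X F) (subtopology X G) g"
    and g_\<phi>: "\<forall>i\<in>I. \<forall>x\<in>U i. g x = \<phi> i x"
    by blast
  obtain h where "homeomorphic_map X X h" "\<forall>x\<in>F. h x = g x"
    using property_D_homeomorphism_extension[OF pD F G g] by blast
  with g_\<phi> show ?thesis
    by (auto simp: F_def)
qed

lemma homeomorphic_map_subtopology_image:
  assumes "homeomorphic_map X Y f" "S \<subseteq> topspace X"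
  shows "homeomorphic_map (subtopology X S) (subtopology Y (f ` S)) f"
  using assms homeomorphic_imp_surjective_map[OF assms(1)]
  by (intro homeomorphic_map_subtopologies) auto

lemma ind_zero_clopen_refinement:
  assumes "ind_zero X" "\<And>a. a \<in> A \<Longrightarrow> openin X (W a) \<and> a \<in> W a"
  obtains U where "\<And>a. a \<in> A \<Longrightarrow> openin X (U a) \<and> closedin X (U a) \<and> a \<in> U a \<and> U a \<subseteq> W a"
proof -
  have "\<forall>a\<in>A. \<exists>U. openin X U \<and> closedin X U \<and> a \<in> U \<and> U \<subseteq> W a"
    using assms unfolding ind_zero_def by blast
  with that show thesis
    by (auto dest!: bchoice)
qed

lemma homeomorphism_extending_discrete_bijection:
  assumes cn: "collectionwise_normal X" and hom: "homogeneous_space X"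
    and iz: "ind_zero X" and pD: "property_D X"
    and A: "discrete_subset X A" "A \<noteq> topspace X"
    and B: "discrete_subset X B" "B \<noteq> topspace X"
    and f: "bij_betw f A B"
  shows "\<exists>h. homeomorphic_map X X h \<and> (\<forall>a\<in>A. h a = f a)"
proof -
  have AX: "A \<subseteq> topspace X" and BX: "B \<subseteq> topspace X"
    using A(1) B(1) by (auto simp: discrete_subset_def)
  have fA: "f a \<in> B" if "a \<in> A" for a
    using f that bij_betwE by blast
  obtain p q where p: "p \<in> topspace X" "p \<notin> A" and q: "q \<in> topspace X" "q \<notin> B"
    using A B AX BX by blast
  obtain C where C: "discrete_family X A C" "\<And>a. a \<in> A \<Longrightarrow> openin X (C a) \<and> a \<in> C a"
    using collectionwise_normal_discrete_subset_expansion[OF cn A(1)] by blast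
  obtain C' where C': "discrete_family X B C'" "\<And>b. b \<in> B \<Longrightarrow> openin X (C' b) \<and> b \<in> C' b"
    using collectionwise_normal_discrete_subset_expansion[OF cn B(1)] by blast
  have "\<forall>a\<in>A. \<exists>k. homeomorphic_map X X k \<and> k a = f a"
    using hom AX BX fA unfolding homogeneous_space_def by blast
  then obtain H where H: "\<And>a. a \<in> A \<Longrightarrow> homeomorphic_map X X (H a)" "\<And>a. a \<in> A \<Longrightarrow> H a a = f a"
    by (auto dest!: bchoice)
  define W where "W a = (C a - {p}) \<inter> {x \<in> topspace X. H a x \<in> C' (f a) - {q}}" for a
  have "openin X (W a) \<and> a \<in> W a" if a: "a \<in> A" for a
  proof
    have "t1_space X"
      using cn by (simp add: collectionwise_normal_def)
    then have "openin X (C a - {p})" "openin X (C' (f a) - {q})"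
      using C(2)[OF a] C'(2)[OF fA[OF a]] p q by (simp_all add: openin_diff closedin_t1_singleton)
    then show "openin X (W a)"
      unfolding W_def using H(1)[OF a] homeomorphic_imp_continuous_map openin_continuous_map_preimage by blast
    show "a \<in> W a"
      using a p q C(2)[OF a] C'(2)[OF fA[OF a]] H(2)[OF a] AX fA by (auto simp: W_def)
  qed
  then obtain U where U: "\<And>a. a \<in> A \<Longrightarrow> openin X (U a) \<and> closedin X (U a) \<and> a \<in> U a \<and> U a \<subseteq> W a"
    using ind_zero_clopen_refinement[OF iz] by blast
  have UX: "U a \<subseteq> topspace X" if "a \<in> A" for a
    using U[OF that] by (auto simp: W_def)
  have "\<exists>h. homeomorphic_map X X h \<and> (\<forall>a\<in>A. \<forall>x\<in>U a. h x = H a x)"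
  proof (rule property_D_discrete_family_homeomorphism_extension[OF pD _ _ p(1) _ _ _ q(1)])
    show "discrete_family X A U"
      using U by (intro discrete_family_subordinate[OF C(1), of id]) (auto simp: W_def)
    show "discrete_family X A (\<lambda>a. H a ` U a)"
      using U f fA unfolding bij_betw_def
      by (intro discrete_family_subordinate[OF C'(1), of f]) (auto simp: W_def)
    show "openin X (U a) \<and> closedin X (U a)" if "a \<in> A" for a
      using U[OF that] by blast
    show "p \<notin> (\<Union>a\<in>A. U a)"
      using U by (auto simp: W_def)
    show "openin X (H a ` U a) \<and> closedin X (H a ` U a)" if "a \<in> A" for a
      using U[OF that] homeomorphic_map_openness[OF H(1)[OF that] UX[OF that]]
        homeomorphic_map_closedness[OF H(1)[OF that] UX[OF that]] by simp
    show "q \<notin> (\<Union>a\<in>A. H a ` U a)"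
      using U by (auto simp: W_def)
    show "homeomorphic_map (subtopology X (U a)) (subtopology X (H a ` U a)) (H a)" if "a \<in> A" for a
      using homeomorphic_map_subtopology_image[OF H(1)[OF that] UX[OF that]] .
  qed
  then obtain h where h: "homeomorphic_map X X h" "\<forall>a\<in>A. \<forall>x\<in>U a. h x = H a x"
    by blast
  have "h a = f a" if "a \<in> A" for a
    using h(2) U[OF that] H(2)[OF that] that by simp
  with h(1) show ?thesis
    by blast
qed

theorem mainTheorem5:
  fixes X :: "'a topology"
  assumes "collectionwise_normal X"
    and "homogeneous_space X"
    and "ind_zero X"
    and "property_D X"
  shows "sDH X"
proof -
  have "\<exists>h. homeomorphic_map X X h \<and> (\<forall>a\<in>A. h a = f a)"
    if A: "discrete_subset X A" and B: "discrete_subset X B" and f: "bij_betw f A B" for A B f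
  proof (cases "A = topspace X \<or> B = topspace X")
    case True
    then have "X = discrete_topology (topspace X)"
      using A B discrete_subset_topspace_imp_discrete_topology by metis
    with assms(4) A B f True have "homeomorphic_map X X f"
      by (intro property_D_discrete_space_bijection) (auto simp: discrete_subset_def)
    then show ?thesis
      by blast
  next
    case False
    with assms A B f show ?thesis
      by (intro homeomorphism_extending_discrete_bijection) auto
  qed
  moreover have "Hausdorff_space X"
    using assms(4) by (simp add: property_D_def)
  ultimately show ?thesis
    unfolding sDH_def by blast
qed

end
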